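(* Let $F$ be a field of characteristic zero, $n,m$ natural numbers, and $l\in W(n,m)$ a nonzero element. Then the ideal of $W(n,m)$ generated by $l$ contains a nonzero element $l'$ such that in every basis element $e^{\alpha}x^{\beta}\partial_p$ occurring in $l'$ with nonzero coefficient, all components of $\beta$ are positive integers.
   Context: $W(n,m)$ has basis $e^{\alpha}x^{\beta}\partial_i$ ($\alpha\in\mathbb Z^n$, $\beta\in\mathbb Z^{n+m}$, $1\le i\le n+m$), realized as vector fields $f\partial_i$ with $f$ in the commutative algebra with basis $e^{\alpha}x^{\beta}$ (multiplication adding exponents), $\partial_i(e^{\alpha}x^{\beta})=a_ie^{\alpha}x^{\beta}+b_ie^{\alpha}x^{\beta-\epsilon_i}$ with $a_i:=0$ for $i>n$, and bracket $[f\partial_i,g\partial_j]=f\partial_i(g)\partial_j-g\partial_j(f)\partial_i$. *)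

theory Defs
  imports Main
begin

text \<open>Basis index of W(n,m): a triple (alpha, beta, i) standing for
  e^alpha x^beta d_i.  alpha, beta are integer vectors encoded as functions
  nat => int (components 0..n-1 resp. 0..n+m-1, all other components 0);
  the derivation index i is 0-based, i < n+m.\<close>
type_synonym wbasis = "(nat \<Rightarrow> int) \<times> (nat \<Rightarrow> int) \<times> nat"

definition valid_basis :: "nat \<Rightarrow> nat \<Rightarrow> wbasis \<Rightarrow> bool" where
  "valid_basis n m k = (case k of (\<alpha>, \<beta>, i) \<Rightarrow>
     (\<forall>j\<ge>n. \<alpha> j = 0) \<and> (\<forall>j\<ge>n+m. \<beta> j = 0) \<and> i < n + m)"

definition Wnm :: "nat \<Rightarrow> nat \<Rightarrow> (wbasis \<Rightarrow> 'a::field) set" where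
  "Wnm n m = {c. finite {k. c k \<noteq> 0} \<and> (\<forall>k. c k \<noteq> 0 \<longrightarrow> valid_basis n m k)}"

definition unit_vec :: "nat \<Rightarrow> nat \<Rightarrow> int" where
  "unit_vec i = (\<lambda>j. if j = i then 1 else 0)"

definition single :: "wbasis \<Rightarrow> 'a::field \<Rightarrow> wbasis \<Rightarrow> 'a" where
  "single k c = (\<lambda>k'. if k' = k then c else 0)"

text \<open>Bracket of basis elements:
  [e^a x^b d_i, e^c x^d d_j]
    = c_i e^(a+c) x^(b+d) d_j + d_i e^(a+c) x^(b+d-eps_i) d_j
      - a_j e^(a+c) x^(b+d) d_i - b_j e^(a+c) x^(b+d-eps_j) d_i,
  where c_i = 0 for i >= n is automatic since c is supported on 0..n-1.\<close>
definition basis_bracket :: "wbasis \<Rightarrow> wbasis \<Rightarrow> wbasis \<Rightarrow> 'a::field" where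
  "basis_bracket p q = (case p of (\<alpha>, \<beta>, i) \<Rightarrow> case q of (\<gamma>, \<delta>, j) \<Rightarrow>
     (\<lambda>k. single (\<lambda>t. \<alpha> t + \<gamma> t, \<lambda>t. \<beta> t + \<delta> t, j) (of_int (\<gamma> i)) k
        + single (\<lambda>t. \<alpha> t + \<gamma> t, \<lambda>t. \<beta> t + \<delta> t - unit_vec i t, j) (of_int (\<delta> i)) k
        - single (\<lambda>t. \<alpha> t + \<gamma> t, \<lambda>t. \<beta> t + \<delta> t, i) (of_int (\<alpha> j)) k
        - single (\<lambda>t. \<alpha> t + \<gamma> t, \<lambda>t. \<beta> t + \<delta> t - unit_vec j t, i) (of_int (\<beta> j)) k))"

definition wbracket :: "(wbasis \<Rightarrow> 'a::field) \<Rightarrow> (wbasis \<Rightarrow> 'a) \<Rightarrow> wbasis \<Rightarrow> 'a" where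
  "wbracket x y = (\<lambda>k. \<Sum>p\<in>{p. x p \<noteq> 0}. \<Sum>q\<in>{q. y q \<noteq> 0}.
                        x p * y q * basis_bracket p q k)"

inductive_set ideal_gen :: "nat \<Rightarrow> nat \<Rightarrow> (wbasis \<Rightarrow> 'a::field) \<Rightarrow> (wbasis \<Rightarrow> 'a) set"
  for n m l where
  gen: "l \<in> ideal_gen n m l"
| add: "x \<in> ideal_gen n m l \<Longrightarrow> y \<in> ideal_gen n m l \<Longrightarrow> (\<lambda>k. x k + y k) \<in> ideal_gen n m l"
| smult: "x \<in> ideal_gen n m l \<Longrightarrow> (\<lambda>k. c * x k) \<in> ideal_gen n m l"
| brk: "x \<in> ideal_gen n m l \<Longrightarrow> w \<in> Wnm n m \<Longrightarrow> wbracket w x \<in> ideal_gen n m l"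

end

(* Bracket l = sum_s f_s d_s with x^D d_j, where D = (N, ..., N).  Every x-exponent of the
   result is N plus an exponent of l minus at most one unit vector, hence positive once N is
   large.  The bracket equals x^D (d_j l - N sum_s f_s x^(-eps_s) d_j), which vanishes for at
   most one value of N unless both d_j l and sum_s f_s x^(-eps_s) d_j vanish.  In characteristic
   zero, d_j l = 0 for all j forces l to be a constant field sum_s c_s d_s, and for such l the
   second term is nonzero for j = s with c_s <> 0. *)
theory Submission
  imports Defs
begin

definition uniform_exp :: "nat \<Rightarrow> nat \<Rightarrow> nat \<Rightarrow> nat \<Rightarrow> int" where
  "uniform_exp n m N = (\<lambda>t. if t < n + m then int N else 0)"

definition exponents_positive :: "nat \<Rightarrow> nat \<Rightarrow> (wbasis \<Rightarrow> 'a::zero) \<Rightarrow> bool" where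
  "exponents_positive n m f = (\<forall>\<alpha> \<beta> p. f (\<alpha>, \<beta>, p) \<noteq> 0 \<longrightarrow> (\<forall>j < n + m. \<beta> j > 0))"

(* For l = sum_s f_s d_s: wderiv l j = sum_s (d_j f_s) d_s and
   wcontract l j = sum_s f_s x^(-eps_s) d_j. *)
definition wderiv :: "(wbasis \<Rightarrow> 'a::field) \<Rightarrow> nat \<Rightarrow> wbasis \<Rightarrow> 'a" where
  "wderiv l j k = (\<Sum>q\<in>{q. l q \<noteq> 0}. case q of (\<gamma>, \<delta>, s) \<Rightarrow>
      l q * (single (\<gamma>, \<delta>, s) (of_int (\<gamma> j)) k
           + single (\<gamma>, \<lambda>t. \<delta> t - unit_vec j t, s) (of_int (\<delta> j)) k))"

definition wcontract :: "(wbasis \<Rightarrow> 'a::field) \<Rightarrow> nat \<Rightarrow> wbasis \<Rightarrow> 'a" where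
  "wcontract l j k = (\<Sum>q\<in>{q. l q \<noteq> 0}. case q of (\<gamma>, \<delta>, s) \<Rightarrow>
      l q * single (\<gamma>, \<lambda>t. \<delta> t - unit_vec s t, j) 1 k)"

lemma single_eq_scale: "single x c k = c * single x 1 k"
  by (simp add: single_def)

lemma eq_minus_unit_vec_iff:
  "(b = (\<lambda>t. (a t::int) - unit_vec j t)) = (a = (\<lambda>t. b t + unit_vec j t))"
  by (auto simp: fun_eq_iff algebra_simps)

lemma wderiv_apply:
  fixes l :: "wbasis \<Rightarrow> 'a::field"
  assumes "finite {k. l k \<noteq> 0}"
  shows "wderiv l j (\<gamma>, \<eta>, s) = l (\<gamma>, \<eta>, s) * of_int (\<gamma> j)
           + l (\<gamma>, \<lambda>t. \<eta> t + unit_vec j t, s) * of_int (\<eta> j + 1)"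
proof -
  let ?k1 = "(\<gamma>, \<eta>, s)" and ?k2 = "(\<gamma>, \<lambda>t. \<eta> t + unit_vec j t, s)"
  have term_eq: "(case q of (g, d, s') \<Rightarrow>
      l q * (single (g, d, s') (of_int (g j)) ?k1
           + single (g, \<lambda>t. d t - unit_vec j t, s') (of_int (d j)) ?k1))
     = (if q = ?k1 then l ?k1 * of_int (\<gamma> j) else 0)
     + (if q = ?k2 then l ?k2 * of_int (\<eta> j + 1) else 0)" for q
  proof (cases q)
    case (fields g d s')
    have "unit_vec j j = 1" by (simp add: unit_vec_def)
    then show ?thesis unfolding fields single_def
      by (simp add: eq_minus_unit_vec_iff distrib_left)
  qed
  show ?thesis
    unfolding wderiv_def term_eq using assms by (simp add: sum.distrib)
qed

lemma wbracket_single_one: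
  fixes l :: "wbasis \<Rightarrow> 'a::field"
  shows "wbracket (single p 1) l k = (\<Sum>q\<in>{q. l q \<noteq> 0}. l q * basis_bracket p q k)"
proof -
  have "{p'. single p (1::'a) p' \<noteq> 0} = {p}" by (auto simp: single_def)
  then show ?thesis unfolding wbracket_def by (simp add: single_def)
qed

lemma basis_bracket_uniform_monomial:
  assumes "s < n + m"
  shows "(basis_bracket ((\<lambda>_. 0), uniform_exp n m N, j) (\<gamma>, \<delta>, s) k :: 'a::field) =
     single (\<gamma>, \<lambda>t. uniform_exp n m N t + \<delta> t, s) (of_int (\<gamma> j)) k
   + single (\<gamma>, \<lambda>t. uniform_exp n m N t + \<delta> t - unit_vec j t, s) (of_int (\<delta> j)) k
   - single (\<gamma>, \<lambda>t. uniform_exp n m N t + \<delta> t - unit_vec s t, j) (of_nat N) k"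
  using assms by (simp add: basis_bracket_def single_def uniform_exp_def)

lemma single_translate:
  "single (\<gamma>, \<lambda>t. (D t::int) + \<delta> t, s) c (\<gamma>', \<lambda>t. D t + \<eta> t, s') = single (\<gamma>, \<delta>, s) c (\<gamma>', \<eta>, s')"
  "single (\<gamma>, \<lambda>t. (D t::int) + \<delta> t - u t, s) c (\<gamma>', \<lambda>t. D t + \<eta> t, s')
     = single (\<gamma>, \<lambda>t. \<delta> t - u t, s) c (\<gamma>', \<eta>, s')"
  by (auto simp: single_def fun_eq_iff algebra_simps)

lemma wbracket_uniform_monomial:
  fixes l :: "wbasis \<Rightarrow> 'a::field"
  assumes "l \<in> Wnm n m"
  shows "wbracket (single ((\<lambda>_. 0), uniform_exp n m N, j) 1) l (\<gamma>, \<lambda>t. uniform_exp n m N t + \<eta> t, s)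
     = wderiv l j (\<gamma>, \<eta>, s) - of_nat N * wcontract l j (\<gamma>, \<eta>, s)"
proof -
  have "l q * basis_bracket ((\<lambda>_. 0), uniform_exp n m N, j) q (\<gamma>, \<lambda>t. uniform_exp n m N t + \<eta> t, s) =
     (case q of (g, d, s') \<Rightarrow>
      l q * (single (g, d, s') (of_int (g j)) (\<gamma>, \<eta>, s)
           + single (g, \<lambda>t. d t - unit_vec j t, s') (of_int (d j)) (\<gamma>, \<eta>, s)))
     - of_nat N * (case q of (g, d, s') \<Rightarrow>
      l q * single (g, \<lambda>t. d t - unit_vec s' t, j) 1 (\<gamma>, \<eta>, s))"
    if "l q \<noteq> 0" for q
  proof (cases q)
    case (fields g d s')
    have "s' < n + m" using assms that fields by (auto simp: Wnm_def valid_basis_def)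
    then show ?thesis
      unfolding fields basis_bracket_uniform_monomial[OF \<open>s' < n + m\<close>] single_translate prod.case
      by (subst single_eq_scale[of _ "of_nat N"]) (simp add: algebra_simps)
  qed
  then show ?thesis
    unfolding wbracket_single_one wderiv_def wcontract_def
    by (simp add: sum_subtractf sum_distrib_left sum.distrib)
qed

lemma wbracket_uniform_monomial_exponents_positive:
  fixes l :: "wbasis \<Rightarrow> 'a::field"
  assumes "l \<in> Wnm n m"
    and large: "\<forall>q. l q \<noteq> 0 \<longrightarrow> (\<forall>t < n + m. 1 < int N + fst (snd q) t)"
  shows "exponents_positive n m (wbracket (single ((\<lambda>_. 0), uniform_exp n m N, j) 1) l)"
  unfolding exponents_positive_def
proof (intro allI impI)
  fix \<alpha> \<beta> p t
  assume nz: "wbracket (single ((\<lambda>_. 0), uniform_exp n m N, j) 1) l (\<alpha>, \<beta>, p) \<noteq> 0"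
    and t: "t < n + m"
  obtain q where "q \<in> {q. l q \<noteq> 0}"
    and "l q * basis_bracket ((\<lambda>_. 0), uniform_exp n m N, j) q (\<alpha>, \<beta>, p) \<noteq> 0"
    using sum.not_neutral_contains_not_neutral[OF nz[unfolded wbracket_single_one]] by blast
  then have q: "l q \<noteq> 0"
    and bq: "basis_bracket ((\<lambda>_. 0), uniform_exp n m N, j) q (\<alpha>, \<beta>, p) \<noteq> (0::'a)"
    by auto
  obtain \<gamma> \<delta> s where q_eq: "q = (\<gamma>, \<delta>, s)" by (cases q)
  have unit_le: "unit_vec i t \<le> 1" for i by (simp add: unit_vec_def)
  have s: "s < n + m" using assms(1) q q_eq by (auto simp: Wnm_def valid_basis_def)
  have "\<beta> = (\<lambda>t. uniform_exp n m N t + \<delta> t)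
      \<or> \<beta> = (\<lambda>t. uniform_exp n m N t + \<delta> t - unit_vec j t)
      \<or> \<beta> = (\<lambda>t. uniform_exp n m N t + \<delta> t - unit_vec s t)"
    using bq unfolding q_eq basis_bracket_uniform_monomial[OF s] by (auto simp: single_def split: if_splits)
  moreover have "1 < int N + \<delta> t" using large q q_eq t by auto
  ultimately show "\<beta> t > 0" using t unit_le[of j] unit_le[of s] by (auto simp: uniform_exp_def)
qed

lemma exists_shift_exceeding_exponents:
  fixes f :: "wbasis \<Rightarrow> 'a::zero" and k :: nat
  assumes "finite {q. f q \<noteq> 0}"
  shows "\<exists>N0. \<forall>N \<ge> N0. \<forall>q. f q \<noteq> 0 \<longrightarrow> (\<forall>t < k. 1 < int N + fst (snd q) t)"
proof -
  let ?E = "(\<lambda>(q, t). fst (snd q) t) ` ({q. f q \<noteq> 0} \<times> {..<k})"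
  have "bdd_below ?E"
    by (intro bdd_below_finite finite_imageI finite_cartesian_product assms) simp
  then obtain M where "\<forall>e \<in> ?E. M \<le> e" by (auto simp: bdd_below_def)
  then have "\<forall>N \<ge> nat (2 - M). \<forall>q. f q \<noteq> 0 \<longrightarrow> (\<forall>t < k. 1 < int N + fst (snd q) t)"
    by force
  then show ?thesis by blast
qed

lemma exists_nat_multiple_diff_nonzero:
  fixes A B :: "'b \<Rightarrow> 'a::ring_1"
  assumes "A \<noteq> (\<lambda>_. 0) \<or> B \<noteq> (\<lambda>_. 0)"
  shows "\<exists>N \<ge> N0. \<exists>k. A k - of_nat N * B k \<noteq> 0"
proof (rule ccontr)
  assume "\<not> ?thesis"
  then have A_eq: "A k = of_nat N * B k" if "N \<ge> N0" for N k
    using that by auto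
  have "B k = 0" for k
    using A_eq[of N0 k] A_eq[of "Suc N0" k] by (simp add: algebra_simps)
  moreover have "A k = 0" for k
    using A_eq[of N0 k] \<open>B k = 0\<close> by simp
  ultimately show False using assms by auto
qed

lemma single_in_Wnm: "valid_basis n m p \<Longrightarrow> single p c \<in> Wnm n m"
proof -
  assume "valid_basis n m p"
  moreover have "{k. single p c k \<noteq> 0} \<subseteq> {p}" by (auto simp: single_def)
  ultimately show ?thesis
    unfolding Wnm_def by (auto simp: single_def intro: finite_subset)
qed

lemma ideal_gen_contains_exponents_positive:
  fixes l :: "wbasis \<Rightarrow> 'a::field"
  assumes l: "l \<in> Wnm n m" and j: "j < n + m"
    and nonzero: "wderiv l j \<noteq> (\<lambda>_. 0) \<or> wcontract l j \<noteq> (\<lambda>_. 0)"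
  shows "\<exists>l' \<in> ideal_gen n m l. l' \<noteq> (\<lambda>_. 0) \<and> exponents_positive n m l'"
proof -
  have "finite {q. l q \<noteq> 0}" using l by (simp add: Wnm_def)
  then obtain N0 where large:
    "\<forall>N \<ge> N0. \<forall>q. l q \<noteq> 0 \<longrightarrow> (\<forall>t < n + m. 1 < int N + fst (snd q) t)"
    using exists_shift_exceeding_exponents by blast
  obtain N \<gamma> \<eta> s where "N \<ge> N0"
    and nz: "wderiv l j (\<gamma>, \<eta>, s) - of_nat N * wcontract l j (\<gamma>, \<eta>, s) \<noteq> 0"
    using exists_nat_multiple_diff_nonzero[OF nonzero] by (metis prod_cases3)
  define w where "w = single ((\<lambda>_. 0), uniform_exp n m N, j) (1::'a)"
  have "w \<in> Wnm n m"
    unfolding w_def using j by (intro single_in_Wnm) (simp add: valid_basis_def uniform_exp_def)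
  then have "wbracket w l \<in> ideal_gen n m l" by (intro ideal_gen.brk ideal_gen.gen)
  moreover have "wbracket w l (\<gamma>, \<lambda>t. uniform_exp n m N t + \<eta> t, s) \<noteq> 0"
    using nz unfolding w_def wbracket_uniform_monomial[OF l] .
  moreover have "exponents_positive n m (wbracket w l)"
    unfolding w_def using wbracket_uniform_monomial_exponents_positive[OF l] large \<open>N \<ge> N0\<close>
    by blast
  ultimately show ?thesis by (intro bexI[of _ "wbracket w l"]) auto
qed

lemma wderiv_eq_0_imp_exponent_eq_0:
  fixes l :: "wbasis \<Rightarrow> 'a::field_char_0"
  assumes fin: "finite {k. l k \<noteq> 0}" and deriv: "wderiv l j = (\<lambda>_. 0)"
    and nz: "l (\<gamma>, \<eta>, s) \<noteq> 0"
  shows "\<gamma> j = 0 \<and> \<eta> j = 0"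
proof -
  have recurrence: "l (\<gamma>', \<eta>', s') * of_int (\<gamma>' j)
      + l (\<gamma>', \<lambda>t. \<eta>' t + unit_vec j t, s') * of_int (\<eta>' j + 1) = 0" for \<gamma>' \<eta>' s'
    using wderiv_apply[OF fin, of j \<gamma>' \<eta>' s'] deriv by simp
  have unit: "unit_vec j j = 1" by (simp add: unit_vec_def)
  show ?thesis
  proof (cases "\<gamma> j = 0")
    case True
    have "l (\<gamma>, \<eta>, s) * of_int (\<eta> j) = 0"
      using recurrence[of \<gamma> "\<lambda>t. \<eta> t - unit_vec j t" s] True unit by simp
    with nz True show ?thesis by simp
  next
    case False
    (* the recurrence propagates a nonzero coefficient to every exponent eta + k eps_j *)
    define c where "c k = (\<gamma>, \<lambda>t. \<eta> t + int k * unit_vec j t, s)" for k :: nat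
    have "l (c k) \<noteq> 0" for k
    proof (induction k)
      case 0
      show ?case using nz by (simp add: c_def)
    next
      case (Suc k)
      have "(\<lambda>t. (\<eta> t + int k * unit_vec j t) + unit_vec j t) = (\<lambda>t. \<eta> t + int (Suc k) * unit_vec j t)"
        by (simp add: algebra_simps)
      then have "l (c k) * of_int (\<gamma> j) + l (c (Suc k)) * of_int (\<eta> j + int k + 1) = 0"
        using recurrence[of \<gamma> "\<lambda>t. \<eta> t + int k * unit_vec j t" s] unit by (simp add: c_def)
      then show ?case using Suc.IH False by auto
    qed
    then have "range c \<subseteq> {k. l k \<noteq> 0}" by auto
    moreover have "inj c"
    proof (rule injI)
      fix x y
      assume "c x = c y"
      then have "fst (snd (c x)) j = fst (snd (c y)) j" by simp
      then show "x = y" by (simp add: c_def unit)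
    qed
    ultimately have "finite (UNIV :: nat set)"
      using fin finite_subset finite_imageD by blast
    then show ?thesis by simp
  qed
qed

lemma wderiv_vanishing_imp_constant:
  fixes l :: "wbasis \<Rightarrow> 'a::field_char_0"
  assumes l: "l \<in> Wnm n m" and deriv: "\<forall>j < n + m. wderiv l j = (\<lambda>_. 0)"
    and nz: "l (\<gamma>, \<eta>, s) \<noteq> 0"
  shows "\<gamma> = (\<lambda>_. 0) \<and> \<eta> = (\<lambda>_. 0)"
proof -
  have "finite {k. l k \<noteq> 0}" using l by (simp add: Wnm_def)
  then have "\<gamma> t = 0 \<and> \<eta> t = 0" if "t < n + m" for t
    using wderiv_eq_0_imp_exponent_eq_0 deriv that nz by blast
  moreover have "\<forall>t \<ge> n. \<gamma> t = 0" "\<forall>t \<ge> n + m. \<eta> t = 0"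
    using l nz by (auto simp: Wnm_def valid_basis_def)
  ultimately have "\<gamma> t = 0 \<and> \<eta> t = 0" for t by (cases "t < n + m") auto
  then show ?thesis by auto
qed

lemma neg_unit_vec_eq_iff: "((\<lambda>t. - unit_vec a t) = (\<lambda>t. - unit_vec b t)) \<longleftrightarrow> a = b"
proof
  assume "(\<lambda>t. - unit_vec a t) = (\<lambda>t. - unit_vec b t)"
  then have "- unit_vec a a = - unit_vec b a" by metis
  then show "a = b" by (simp add: unit_vec_def split: if_splits)
qed simp

lemma wcontract_of_constant:
  fixes l :: "wbasis \<Rightarrow> 'a::field"
  assumes fin: "finite {k. l k \<noteq> 0}"
    and const: "\<And>\<gamma> \<eta> s. l (\<gamma>, \<eta>, s) \<noteq> 0 \<Longrightarrow> \<gamma> = (\<lambda>_. 0) \<and> \<eta> = (\<lambda>_. 0)"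
  shows "wcontract l j ((\<lambda>_. 0), (\<lambda>t. - unit_vec s t), j) = l ((\<lambda>_. 0), (\<lambda>_. 0), s)"
proof -
  let ?p = "((\<lambda>_. 0::int), (\<lambda>_. 0::int), s)"
  have "wcontract l j ((\<lambda>_. 0), (\<lambda>t. - unit_vec s t), j)
      = (\<Sum>q\<in>{q. l q \<noteq> 0}. if q = ?p then l q else 0)"
    unfolding wcontract_def
  proof (rule sum.cong[OF refl])
    fix q
    assume "q \<in> {q. l q \<noteq> 0}"
    then obtain s' where "q = ((\<lambda>_. 0), (\<lambda>_. 0), s')" using const by (cases q) auto
    then show "(case q of (\<gamma>, \<delta>, s') \<Rightarrow> l q * single (\<gamma>, \<lambda>t. \<delta> t - unit_vec s' t, j) 1
          ((\<lambda>_. 0), (\<lambda>t. - unit_vec s t), j)) = (if q = ?p then l q else 0)"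
      by (simp add: single_def neg_unit_vec_eq_iff)
  qed
  also have "\<dots> = l ?p" using fin by simp
  finally show ?thesis .
qed

lemma wderiv_or_wcontract_nonzero:
  fixes l :: "wbasis \<Rightarrow> 'a::field_char_0"
  assumes l: "l \<in> Wnm n m" and "l \<noteq> (\<lambda>_. 0)"
  shows "\<exists>j < n + m. wderiv l j \<noteq> (\<lambda>_. 0) \<or> wcontract l j \<noteq> (\<lambda>_. 0)"
proof (rule ccontr)
  assume "\<not> ?thesis"
  then have deriv: "\<forall>j < n + m. wderiv l j = (\<lambda>_. 0)"
    and contract: "\<forall>j < n + m. wcontract l j = (\<lambda>_. 0)" by auto
  obtain \<gamma> \<eta> s where nz: "l (\<gamma>, \<eta>, s) \<noteq> 0" using assms(2) by (metis prod_cases3)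
  then have "s < n + m" using l by (auto simp: Wnm_def valid_basis_def)
  have const: "\<gamma>' = (\<lambda>_. 0) \<and> \<eta>' = (\<lambda>_. 0)" if "l (\<gamma>', \<eta>', s') \<noteq> 0" for \<gamma>' \<eta>' s'
    using wderiv_vanishing_imp_constant[OF l deriv that] .
  have "finite {k. l k \<noteq> 0}" using l by (simp add: Wnm_def)
  then have "wcontract l s ((\<lambda>_. 0), (\<lambda>t. - unit_vec s t), s) = l ((\<lambda>_. 0), (\<lambda>_. 0), s)"
    using wcontract_of_constant const by blast
  also have "\<dots> \<noteq> 0" using nz const[OF nz] by simp
  finally show False using contract \<open>s < n + m\<close> by simp
qed

theorem lemma1:
  fixes l :: "wbasis \<Rightarrow> 'a::field_char_0" and n m :: nat
  assumes "l \<in> Wnm n m" and "l \<noteq> (\<lambda>k. 0)"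
  shows "\<exists>l' \<in> ideal_gen n m l. l' \<noteq> (\<lambda>k. 0) \<and>
           (\<forall>\<alpha> \<beta> p. l' (\<alpha>, \<beta>, p) \<noteq> 0 \<longrightarrow> (\<forall>j < n + m. \<beta> j > 0))"
proof -
  obtain j where "j < n + m" and "wderiv l j \<noteq> (\<lambda>_. 0) \<or> wcontract l j \<noteq> (\<lambda>_. 0)"
    using wderiv_or_wcontract_nonzero[OF assms] by blast
  then show ?thesis
    using ideal_gen_contains_exponents_positive[OF assms(1)] unfolding exponents_positive_def
    by blast
qed

end
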